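(* Let $\mathcal{A}$ be a commutative integral domain with unit and of characteristic zero, and let $\mathcal{X}$ be a nonzero locally nilpotent derivation of $\mathcal{A}$. Let $s\in\mathcal{A}$ be a local slice of $\mathcal{X}$, put $c=\mathcal{X}(s)$, and let $p,c_1\in\mathcal{A}$ be such that $c=pc_1$. Then there exists $s_1\in\mathcal{A}$ with $\mathcal{X}(s_1)=c_1$ if and only if the ideal $p\mathcal{A}$ contains an element of the form $s+a$ with $a\in\mathcal{A}^{\mathcal{X}}$.
   Context: A derivation $\mathcal{X}$ of $\mathcal{A}$ is locally nilpotent if for every $a\in\mathcal{A}$ there is $n\ge1$ with $\mathcal{X}^n(a)=0$. The ring of constants is $\mathcal{A}^{\mathcal{X}}=\{a\in\mathcal{A}:\mathcal{X}(a)=0\}$. An element $s\in\mathcal{A}$ is a local slice of $\mathcal{X}$ if $\mathcal{X}(s)\neq0$ and $\mathcal{X}^2(s)=0$. *)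

theory Defs
  imports Main
begin

definition is_derivation :: "('a::comm_ring_1 \<Rightarrow> 'a) \<Rightarrow> bool" where
  "is_derivation D \<longleftrightarrow>
     (\<forall>a b. D (a + b) = D a + D b) \<and> (\<forall>a b. D (a * b) = a * D b + D a * b)"

definition locally_nilpotent :: "('a::comm_ring_1 \<Rightarrow> 'a) \<Rightarrow> bool" where
  "locally_nilpotent D \<longleftrightarrow> (\<forall>a. \<exists>n\<ge>1. (D ^^ n) a = 0)"

definition constants :: "('a::comm_ring_1 \<Rightarrow> 'a) \<Rightarrow> 'a set" where
  "constants D = {a. D a = 0}"

definition local_slice :: "('a::comm_ring_1 \<Rightarrow> 'a) \<Rightarrow> 'a \<Rightarrow> bool" where
  "local_slice D s \<longleftrightarrow> D s \<noteq> 0 \<and> D (D s) = 0"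

end

theory Submission
  imports Defs
begin

text \<open>
  The kernel of a locally nilpotent derivation of a domain of characteristic zero is factorially
  closed: if \<open>X\<^sup>m x\<close> and \<open>X\<^sup>n y\<close> are the last nonzero iterates, Leibniz' rule gives
  \<open>X\<^sup>m\<^sup>+\<^sup>n (x y) = (m+n choose m) X\<^sup>m x X\<^sup>n y \<noteq> 0\<close>, so \<open>X (x y) = 0\<close> forces \<open>m = n = 0\<close>.
  Hence \<open>X s = p c\<^sub>1\<close> with \<open>X (X s) = 0\<close> gives \<open>X p = 0\<close>. Now if \<open>X s\<^sub>1 = c\<^sub>1\<close> then
  \<open>a = p s\<^sub>1 - s\<close> is a constant with \<open>p \<bar> s + a\<close>; conversely, if \<open>s + a = p t\<close> with \<open>X a = 0\<close>,
  then \<open>p X t = X s = p c\<^sub>1\<close>, and cancelling \<open>p\<close> gives \<open>X t = c\<^sub>1\<close>.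
\<close>

lemma binomial_sum_Suc:
  fixes f :: "nat \<Rightarrow> nat \<Rightarrow> 'a::comm_semiring_1"
  shows "(\<Sum>i\<le>Suc n. of_nat (Suc n choose i) * f i (Suc n - i))
       = (\<Sum>i\<le>n. of_nat (n choose i) * (f (Suc i) (n - i) + f i (Suc n - i)))"
proof -
  have shifted: "(\<Sum>i\<le>n. of_nat (n choose i) * f i (Suc n - i))
      = f 0 (Suc n) + (\<Sum>i\<le>n. of_nat (n choose Suc i) * f (Suc i) (n - i))"
  proof -
    have "(\<Sum>i\<le>n. of_nat (n choose i) * f i (Suc n - i))
        = (\<Sum>i\<le>Suc n. of_nat (n choose i) * f i (Suc n - i))"
      by (simp add: binomial_eq_0)
    also have "\<dots> = f 0 (Suc n) + (\<Sum>i\<le>n. of_nat (n choose Suc i) * f (Suc i) (n - i))"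
      by (subst sum.atMost_Suc_shift) simp
    finally show ?thesis .
  qed
  have "(\<Sum>i\<le>Suc n. of_nat (Suc n choose i) * f i (Suc n - i))
      = f 0 (Suc n) + (\<Sum>i\<le>n. of_nat (Suc n choose Suc i) * f (Suc i) (n - i))"
    by (subst sum.atMost_Suc_shift) simp
  also have "\<dots> = (\<Sum>i\<le>n. of_nat (n choose i) * f (Suc i) (n - i))
      + (f 0 (Suc n) + (\<Sum>i\<le>n. of_nat (n choose Suc i) * f (Suc i) (n - i)))"
    by (simp add: algebra_simps sum.distrib)
  also have "\<dots> = (\<Sum>i\<le>n. of_nat (n choose i) * (f (Suc i) (n - i) + f i (Suc n - i)))"
    by (simp only: shifted[symmetric] distrib_left sum.distrib)
  finally show ?thesis .
qed

context
  fixes X :: "'a::comm_ring_1 \<Rightarrow> 'a"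
  assumes derivation: "is_derivation X"
begin

lemma derivation_add: "X (a + b) = X a + X b"
  and derivation_mult: "X (a * b) = a * X b + X a * b"
  using derivation unfolding is_derivation_def by auto

lemma derivation_zero: "X 0 = 0"
  using derivation_add[of 0 0] by simp

lemma derivation_one: "X 1 = 0"
  using derivation_mult[of 1 1] by simp

lemma derivation_of_nat: "X (of_nat n) = 0"
  by (induction n) (simp_all add: derivation_zero derivation_one derivation_add)

lemma derivation_sum: "X (sum f A) = (\<Sum>i\<in>A. X (f i))"
  by (induction A rule: infinite_finite_induct) (simp_all add: derivation_zero derivation_add)

lemma derivation_diff: "X (a - b) = X a - X b"
  using derivation_add[of "a - b" b] by (simp add: algebra_simps)

lemma derivation_funpow_zero: "(X ^^ k) 0 = 0"
  by (induction k) (simp_all add: derivation_zero)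

lemma derivation_funpow_mult:
  "(X ^^ n) (x * y) = (\<Sum>i\<le>n. of_nat (n choose i) * ((X ^^ i) x * (X ^^ (n - i)) y))"
proof (induction n)
  case 0
  then show ?case by simp
next
  case (Suc n)
  have "(X ^^ Suc n) (x * y) = X (\<Sum>i\<le>n. of_nat (n choose i) * ((X ^^ i) x * (X ^^ (n - i)) y))"
    using Suc by simp
  also have "\<dots> = (\<Sum>i\<le>n. of_nat (n choose i)
      * ((X ^^ Suc i) x * (X ^^ (n - i)) y + (X ^^ i) x * (X ^^ (Suc n - i)) y))"
    by (auto simp: derivation_sum derivation_mult derivation_of_nat algebra_simps
        Suc_diff_le intro!: sum.cong)
  also have "\<dots> = (\<Sum>i\<le>Suc n. of_nat (Suc n choose i) * ((X ^^ i) x * (X ^^ (Suc n - i)) y))"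
    by (rule binomial_sum_Suc[symmetric])
  finally show ?case .
qed

lemma derivation_funpow_mult_top:
  assumes x: "(X ^^ Suc m) x = 0" and y: "(X ^^ Suc n) y = 0"
  shows "(X ^^ (m + n)) (x * y) = of_nat ((m + n) choose m) * ((X ^^ m) x * (X ^^ n) y)"
proof -
  have vanish: "(X ^^ k) z = 0" if "(X ^^ Suc j) z = 0" and "j < k" for j k z
  proof -
    have "k = (k - Suc j) + Suc j"
      using \<open>j < k\<close> by simp
    then have "(X ^^ k) z = (X ^^ (k - Suc j)) ((X ^^ Suc j) z)"
      by (metis funpow_add o_apply)
    with that show ?thesis by (simp add: derivation_funpow_zero)
  qed
  have "(\<Sum>i\<in>{..m + n} - {m}. of_nat ((m + n) choose i) * ((X ^^ i) x * (X ^^ (m + n - i)) y)) = 0"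
  proof (rule sum.neutral, rule ballI)
    fix i assume "i \<in> {..m + n} - {m}"
    then have "n < m + n - i \<or> m < i" by auto
    then have "(X ^^ i) x = 0 \<or> (X ^^ (m + n - i)) y = 0"
      using vanish[OF x, of i] vanish[OF y, of "m + n - i"] by blast
    then show "of_nat ((m + n) choose i) * ((X ^^ i) x * (X ^^ (m + n - i)) y) = 0"
      by auto
  qed
  then show ?thesis
    by (simp add: derivation_funpow_mult sum.remove[of _ m])
qed

end

lemma locally_nilpotent_last_nonzero_iterate:
  fixes X :: "'a::comm_ring_1 \<Rightarrow> 'a"
  assumes "locally_nilpotent X" and "x \<noteq> 0"
  obtains m where "(X ^^ m) x \<noteq> 0" and "(X ^^ Suc m) x = 0"
proof -
  obtain n where "(X ^^ n) x = 0"
    using assms(1) unfolding locally_nilpotent_def by blast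
  define N where "N = (LEAST k. (X ^^ k) x = 0)"
  have N: "(X ^^ N) x = 0"
    unfolding N_def by (rule LeastI) fact
  then obtain m where m: "N = Suc m"
    using assms(2) by (cases N) auto
  have "(X ^^ m) x \<noteq> 0"
    using not_less_Least[of m "\<lambda>k. (X ^^ k) x = 0"] m unfolding N_def by auto
  with N m that show thesis by blast
qed

lemma locally_nilpotent_kernel_factorially_closed:
  fixes X :: "'a::{idom, ring_char_0} \<Rightarrow> 'a"
  assumes derivation: "is_derivation X" and "locally_nilpotent X"
    and xy: "X (x * y) = 0" and "x \<noteq> 0" and "y \<noteq> 0"
  shows "X x = 0"
proof -
  obtain m where m: "(X ^^ m) x \<noteq> 0" "(X ^^ Suc m) x = 0"
    using locally_nilpotent_last_nonzero_iterate assms(2,4) by blast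
  obtain n where n: "(X ^^ n) y \<noteq> 0" "(X ^^ Suc n) y = 0"
    using locally_nilpotent_last_nonzero_iterate assms(2,5) by blast
  have top: "(X ^^ (m + n)) (x * y) \<noteq> 0"
    using m n by (simp add: derivation_funpow_mult_top[OF derivation])
  have "m + n = 0"
  proof (rule ccontr)
    assume "m + n \<noteq> 0"
    then obtain k where "m + n = Suc k"
      by (cases "m + n") auto
    then have "(X ^^ (m + n)) (x * y) = (X ^^ k) (X (x * y))"
      by (simp only: funpow_Suc_right o_apply)
    with top xy show False
      by (simp add: derivation_funpow_zero[OF derivation])
  qed
  with m show ?thesis by simp
qed

theorem lemma3p2:
  fixes X :: "'a::{idom, ring_char_0} \<Rightarrow> 'a"
    and s p c1 :: 'a
  assumes "is_derivation X"
    and "locally_nilpotent X"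
    and "X \<noteq> (\<lambda>_. 0)"
    and "local_slice X s"
    and "X s = p * c1"
  shows "(\<exists>s1. X s1 = c1) \<longleftrightarrow> (\<exists>a \<in> constants X. p dvd (s + a))"
proof -
  note derivation = assms(1) and slice = assms(5)
  have "X s \<noteq> 0" "X (X s) = 0"
    using assms(4) unfolding local_slice_def by auto
  then have "p \<noteq> 0" "c1 \<noteq> 0" "X (p * c1) = 0"
    using slice by auto
  then have Xp: "X p = 0"
    using locally_nilpotent_kernel_factorially_closed[OF derivation assms(2)] by blast
  show ?thesis
  proof
    assume "\<exists>s1. X s1 = c1"
    then obtain s1 where "X s1 = c1" by blast
    then have "p * s1 - s \<in> constants X"
      using Xp slice by (simp add: constants_def derivation_diff derivation_mult derivation)
    moreover have "p dvd s + (p * s1 - s)" by simp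
    ultimately show "\<exists>a \<in> constants X. p dvd (s + a)" by blast
  next
    assume "\<exists>a \<in> constants X. p dvd (s + a)"
    then obtain a t where a: "X a = 0" and t: "s + a = p * t"
      unfolding constants_def by (auto simp: dvd_def)
    have "p * X t = p * c1"
      using arg_cong[OF t, of X] a Xp slice by (auto simp: derivation_add derivation_mult derivation)
    with \<open>p \<noteq> 0\<close> have "X t = c1" by (metis mult_cancel_left)
    then show "\<exists>s1. X s1 = c1" ..
  qed
qed

end
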